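(* Let $V$ be a finite-dimensional $\Bbbk$-vector space and $\lambda$ a partition. The map $\mathrm{ad}\colon V\otimes\mathbb S_\lambda(V)\to\mathbb S_\lambda(\mathsf L_{(2)})$ induced by the Lie bracket is injective whenever $\lambda$ has at least two parts; when $\lambda=(n)$ with $n\ge1$, its kernel is isomorphic to $\mathbb S_{(n+1)}(V)=\mathrm{Sym}^{n+1}(V)$.
   Context: $\Bbbk$ is a field of characteristic $0$. $\mathsf L_{(2)}=V\oplus\bigwedge^2V$ is the free nilpotent Lie algebra of class $2$ on $V$. $\mathbb S_\lambda$ is the Schur functor; $\mathbb S_\lambda(V)\subset\mathbb S_\lambda(\mathsf L_{(2)})$ via $V\subset\mathsf L_{(2)}$, and $\mathsf L_{(2)}$ acts on $\mathbb S_\lambda(\mathsf L_{(2)})$ by functoriality from the adjoint action (so $X\in V$ acts as a derivation extending $Y\mapsto[X,Y]$); $\mathrm{ad}(X\otimes f)$ is the action of $X$ on $f$. *)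

theory Defs
  imports Main "HOL-Combinatorics.Permutations"
begin

text \<open>V = k^d with basis indexed by {..<d};
  L_(2) = V (+) Lambda^2 V with basis LV i (i<d) and LW i j = e_i wedge e_j (i<j<d).
  A tensor in W^{(x)m} (W with basis indexed by B) is a function on words (lists)
  over B of length m, vanishing on all other lists.\<close>

definition words :: "'b set \<Rightarrow> nat \<Rightarrow> 'b list set" where
  "words B m = {w. length w = m \<and> set w \<subseteq> B}"

definition tensors :: "'b set \<Rightarrow> nat \<Rightarrow> ('b list \<Rightarrow> 'k::zero) set" where
  "tensors B m = {T. \<forall>w. w \<notin> words B m \<longrightarrow> T w = 0}"

definition smul :: "'k::times \<Rightarrow> ('b list \<Rightarrow> 'k) \<Rightarrow> ('b list \<Rightarrow> 'k)" where
  "smul c T = (\<lambda>w. c * T w)"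

definition is_partition :: "nat list \<Rightarrow> bool" where
  "is_partition lam \<longleftrightarrow> sorted_wrt (\<ge>) lam \<and> 0 \<notin> set lam"

text \<open>Standard filling of the Young diagram of lam: positions 0..n-1 row by row.\<close>
definition rowof :: "nat list \<Rightarrow> nat \<Rightarrow> nat" where
  "rowof lam p = (LEAST r. p < sum_list (take (Suc r) lam))"

definition colof :: "nat list \<Rightarrow> nat \<Rightarrow> nat" where
  "colof lam p = p - sum_list (take (rowof lam p) lam)"

definition row_group :: "nat list \<Rightarrow> (nat \<Rightarrow> nat) set" where
  "row_group lam = {s. s permutes {..<sum_list lam} \<and>
      (\<forall>p<sum_list lam. rowof lam (s p) = rowof lam p)}"

definition col_group :: "nat list \<Rightarrow> (nat \<Rightarrow> nat) set" where
  "col_group lam = {s. s permutes {..<sum_list lam} \<and>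
      (\<forall>p<sum_list lam. colof lam (s p) = colof lam p)}"

definition pact :: "(nat \<Rightarrow> nat) \<Rightarrow> ('b list \<Rightarrow> 'k) \<Rightarrow> ('b list \<Rightarrow> 'k)" where
  "pact s T = (\<lambda>w. T (map (\<lambda>i. w ! s i) [0..<length w]))"

definition young_sym :: "nat list \<Rightarrow> ('b list \<Rightarrow> 'k::comm_ring_1) \<Rightarrow> ('b list \<Rightarrow> 'k)" where
  "young_sym lam T = (\<lambda>w. \<Sum>p\<in>row_group lam. \<Sum>q\<in>col_group lam.
       of_int (sign q) * pact p (pact q T) w)"

definition schur :: "'b set \<Rightarrow> nat list \<Rightarrow> ('b list \<Rightarrow> 'k::comm_ring_1) set" where
  "schur B lam = young_sym lam ` tensors B (sum_list lam)"

datatype lb = LV nat | LW nat nat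

definition Lbasis :: "nat \<Rightarrow> lb set" where
  "Lbasis d = LV ` {..<d} \<union> {LW i j | i j. i < j \<and> j < d}"

fun unLV :: "lb \<Rightarrow> nat" where
  "unLV (LV i) = i" | "unLV (LW i j) = 0"

definition emb :: "(nat list \<Rightarrow> 'k::zero) \<Rightarrow> (lb list \<Rightarrow> 'k)" where
  "emb T = (\<lambda>w. if set w \<subseteq> range LV then T (map unLV w) else 0)"

text \<open>adc x c b = coefficient of basis vector c in [x, b] (x in V, b a basis vector of L).\<close>
fun adc :: "(nat \<Rightarrow> 'k::comm_ring_1) \<Rightarrow> lb \<Rightarrow> lb \<Rightarrow> 'k" where
  "adc x (LW i j) (LV b) = (if b = j then x i else if b = i then - x j else 0)"
| "adc x (LW i j) (LW a b) = 0"
| "adc x (LV i) b = 0"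

text \<open>Action of x in V on L^{(x)m} by functoriality from the adjoint action
  (derivation extending Y \<mapsto> [x,Y]).\<close>
definition lie_act :: "nat \<Rightarrow> (nat \<Rightarrow> 'k::comm_ring_1) \<Rightarrow> (lb list \<Rightarrow> 'k) \<Rightarrow> (lb list \<Rightarrow> 'k)" where
  "lie_act d x T = (\<lambda>w. if w \<in> words (Lbasis d) (length w) then
      (\<Sum>p<length w. \<Sum>b\<in>Lbasis d. adc x (w ! p) b * T (w[p := b])) else 0)"

definition slice :: "(nat list \<Rightarrow> 'k) \<Rightarrow> nat \<Rightarrow> (nat list \<Rightarrow> 'k)" where
  "slice T a = (\<lambda>u. T (a # u))"

definition unitv :: "nat \<Rightarrow> nat \<Rightarrow> 'k::zero_neq_one" where
  "unitv a = (\<lambda>i. if i = a then 1 else 0)"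

text \<open>V (x) V^{(x)n}: words of length n+1, first letter is the V factor.
  V (x) S_lam(V): all slices lie in S_lam(V).\<close>
definition VtensS :: "nat \<Rightarrow> nat list \<Rightarrow> (nat list \<Rightarrow> 'k::comm_ring_1) set" where
  "VtensS d lam = {T \<in> tensors {..<d} (Suc (sum_list lam)).
       \<forall>a<d. slice T a \<in> schur {..<d} lam}"

text \<open>ad(X (x) f) = action of X on f; extended linearly: sum over basis e_a of V.\<close>
definition ad :: "nat \<Rightarrow> (nat list \<Rightarrow> 'k::comm_ring_1) \<Rightarrow> (lb list \<Rightarrow> 'k)" where
  "ad d T = (\<lambda>w. \<Sum>a<d. lie_act d (unitv a) (emb (slice T a)) w)"

definition GLm :: "nat \<Rightarrow> (nat \<Rightarrow> nat \<Rightarrow> 'k::comm_ring_1) set" where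
  "GLm d = {g. \<exists>h. \<forall>i<d. \<forall>j<d.
      (\<Sum>k<d. g i k * h k j) = (if i = j then 1 else 0) \<and>
      (\<Sum>k<d. h i k * g k j) = (if i = j then 1 else 0)}"

definition gl_act :: "nat \<Rightarrow> (nat \<Rightarrow> nat \<Rightarrow> 'k::comm_ring_1) \<Rightarrow> (nat list \<Rightarrow> 'k) \<Rightarrow> (nat list \<Rightarrow> 'k)" where
  "gl_act d g T = (\<lambda>w. if w \<in> words {..<d} (length w) then
      (\<Sum>u\<in>words {..<d} (length w). (\<Prod>p<length w. g (w ! p) (u ! p)) * T u) else 0)"

definition linear_on :: "('a list \<Rightarrow> 'k::comm_ring_1) set \<Rightarrow>
    (('a list \<Rightarrow> 'k) \<Rightarrow> ('b list \<Rightarrow> 'k)) \<Rightarrow> bool" where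
  "linear_on A f \<longleftrightarrow> (\<forall>x\<in>A. \<forall>y\<in>A. f (\<lambda>w. x w + y w) = (\<lambda>w. f x w + f y w)) \<and>
      (\<forall>c. \<forall>x\<in>A. f (smul c x) = smul c (f x))"

end

theory Submission
  imports Defs
begin

text \<open>Evaluating \<open>ad T\<close> on a word with one letter \<open>e\<^sub>i \<and> e\<^sub>j\<close> and all other letters in
  \<open>V\<close> gives the difference of two entries of \<open>T\<close> that differ by exchanging the \<open>V\<close>-factor with
  one tensor position. Hence \<open>ad T = 0\<close> exactly when \<open>T\<close> is a symmetric tensor. If \<open>\<lambda>\<close> has
  two rows, a symmetric tensor whose slices lie in \<open>S\<^sub>\<lambda>(V)\<close> vanishes: symmetrising the Young
  symmetriser produces the sum of the signs over the column group, which is 0 because the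
  column group contains the transposition of the first two cells of the first column. For
  \<open>\<lambda> = (n)\<close> the slices of a symmetric tensor are again symmetric, so the kernel is literally
  \<open>Sym\<^sup>n\<^sup>+\<^sup>1(V)\<close> inside \<open>V \<otimes> V\<^sup>\<otimes>\<^sup>n\<close> and the identity is the required equivariant isomorphism.\<close>

definition symmetric_tensor :: "nat \<Rightarrow> ('b list \<Rightarrow> 'k) \<Rightarrow> bool" where
  "symmetric_tensor N T \<longleftrightarrow>
     (\<forall>w \<sigma>. length w = N \<longrightarrow> \<sigma> permutes {..<N} \<longrightarrow> T (permute_list \<sigma> w) = T w)"

lemma symmetric_tensorD:
  "symmetric_tensor N T \<Longrightarrow> length w = N \<Longrightarrow> \<sigma> permutes {..<N} \<Longrightarrow>
     T (permute_list \<sigma> w) = T w"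
  by (simp add: symmetric_tensor_def)

lemma permute_list_transpose:
  assumes "x < length w" "y < length w"
  shows "permute_list (Transposition.transpose x y) w = w[x := w!y, y := w!x]"
  using assms by (intro nth_equalityI) (auto simp: permute_list_def transpose_def nth_list_update)

lemma permute_list_transpose_0_Suc:
  "p < length v \<Longrightarrow> permute_list (Transposition.transpose 0 (Suc p)) (a # v) = v ! p # v[p := a]"
  by (simp add: permute_list_transpose)

lemma Cons_permute_list_transpose:
  "x < length w \<Longrightarrow> y < length w \<Longrightarrow>
     a # permute_list (Transposition.transpose x y) w
       = permute_list (Transposition.transpose (Suc x) (Suc y)) (a # w)"
  by (simp add: permute_list_transpose)

lemma symmetric_tensor_if_transpositions:
  assumes transp: "\<And>w a b. length w = N \<Longrightarrow> a < N \<Longrightarrow> b < N \<Longrightarrow>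
      T (permute_list (Transposition.transpose a b) w) = T w"
  shows "symmetric_tensor N T"
proof -
  have "\<forall>w. length w = N \<longrightarrow> T (permute_list \<sigma> w) = T w" if "\<sigma> permutes {..<N}" for \<sigma>
    using that finite_lessThan
  proof (induct rule: permutes_induct)
    case id
    then show ?case by simp
  next
    case (swap a b \<sigma>)
    show ?case
    proof (intro allI impI)
      fix w :: "'a list" assume "length w = N"
      then show "T (permute_list (Transposition.transpose a b \<circ> \<sigma>) w) = T w"
        using swap by (simp add: permute_list_compose transp)
    qed
  qed
  then show ?thesis by (simp add: symmetric_tensor_def)
qed

lemma symmetric_tensor_if_head_transpositions:
  assumes head: "\<And>w k. length w = N \<Longrightarrow> k < N \<Longrightarrow>
      T (permute_list (Transposition.transpose 0 k) w) = T w"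
  shows "symmetric_tensor N T"
proof (rule symmetric_tensor_if_transpositions)
  fix w :: "'a list" and a b assume w: "length w = N" and ab: "a < N" "b < N"
  show "T (permute_list (Transposition.transpose a b) w) = T w"
  proof (cases "a = 0 \<or> b = 0 \<or> a = b")
    case True
    then show ?thesis
      using head[OF w] ab transpose_commute[of a b] by (metis permute_list_id transpose_same)
  next
    case False
    let ?t = "\<lambda>k. Transposition.transpose 0 k"
    have "Transposition.transpose a b = ?t a \<circ> ?t b \<circ> ?t a"
      using False by (simp add: fun_eq_iff transpose_def)
    moreover have "?t k permutes {..<N}" if "k < N" for k
      using that by (intro permutes_swap_id) auto
    ultimately show ?thesis using w ab by (simp add: permute_list_compose head)
  qed
qed

lemma symmetric_tensor_slice:
  assumes "symmetric_tensor (Suc n) T"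
  shows "symmetric_tensor n (slice T a)"
proof (rule symmetric_tensor_if_transpositions)
  fix w :: "nat list" and x y assume "length w = n" "x < n" "y < n"
  then show "slice T a (permute_list (Transposition.transpose x y) w) = slice T a w"
    using symmetric_tensorD[OF assms, of "a # w" "Transposition.transpose (Suc x) (Suc y)"]
    by (simp add: slice_def Cons_permute_list_transpose permutes_swap_id)
qed

lemma slice_tensors: "T \<in> tensors B (Suc n) \<Longrightarrow> a \<in> B \<Longrightarrow> slice T a \<in> tensors B n"
  by (auto simp: tensors_def words_def slice_def)

lemma tensors_permute_list_eq_0:
  assumes "T \<in> tensors B N" "w \<notin> words B N" "\<sigma> permutes {..<length w}"
  shows "T (permute_list \<sigma> w) = 0"
proof -
  have "permute_list \<sigma> w \<notin> words B N"
    using assms(2,3) by (simp add: words_def)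
  then show ?thesis using assms(1) by (simp add: tensors_def)
qed

lemma pact_eq_permute_list: "pact s T w = T (permute_list s w)"
  by (simp add: pact_def permute_list_def)

lemma sum_sign_eq_0_if_odd_involution:
  assumes odd: "permutation t" "sign t = -1" and involution: "t \<circ> t = id"
    and closed: "\<And>q. q \<in> G \<Longrightarrow> t \<circ> q \<in> G" and perms: "\<And>q. q \<in> G \<Longrightarrow> permutation q"
  shows "(\<Sum>q\<in>G. sign q) = (0::int)"
proof -
  have "(\<Sum>q\<in>G. sign q) = (\<Sum>q\<in>G. sign (t \<circ> q))"
    by (rule sum.reindex_bij_witness[where i="(\<circ>) t" and j="(\<circ>) t"])
       (simp_all add: closed involution o_assoc)
  also have "\<dots> = - (\<Sum>q\<in>G. sign q)"
    by (simp add: sign_compose odd perms sum_negf)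
  finally show ?thesis by simp
qed

lemma sum_sign_col_group_eq_0:
  assumes "is_partition lam" "2 \<le> length lam"
  shows "(\<Sum>q\<in>col_group lam. sign q) = (0::int)"
proof -
  obtain a b rest where lam: "lam = a # b # rest"
    using assms(2) by (cases lam; cases "tl lam") auto
  have "a > 0" "b > 0"
    using assms(1) by (auto simp: lam is_partition_def intro: Nat.gr0I)
  have row_a: "rowof lam a = 1"
    unfolding rowof_def
  proof (rule Least_equality)
    show "a < sum_list (take (Suc 1) lam)" using \<open>b > 0\<close> by (simp add: lam)
  next
    fix r assume "a < sum_list (take (Suc r) lam)"
    then show "1 \<le> r" by (cases r) (auto simp: lam)
  qed
  have "colof lam 0 = 0" "colof lam a = 0"
    unfolding colof_def row_a by (simp_all add: lam)
  then have colof_t: "colof lam (Transposition.transpose 0 a p) = colof lam p" for p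
    by (simp add: transpose_def)
  have t_permutes: "Transposition.transpose 0 a permutes {..<sum_list lam}"
    using \<open>b > 0\<close> by (intro permutes_swap_id) (auto simp: lam)
  show ?thesis
  proof (rule sum_sign_eq_0_if_odd_involution)
    show "permutation (Transposition.transpose 0 a)" "sign (Transposition.transpose 0 a) = -1"
      using \<open>a > 0\<close> by (simp_all add: permutation_swap_id sign_swap_id)
    show "Transposition.transpose 0 a \<circ> Transposition.transpose 0 a = id" by simp
  next
    fix q assume "q \<in> col_group lam"
    then show "Transposition.transpose 0 a \<circ> q \<in> col_group lam" "permutation q"
      using t_permutes colof_t
      by (auto simp: col_group_def permutes_compose intro: permutes_imp_permutation)
  qed
qed

lemma sum_permutations_young_sym_eq_0:
  fixes X :: "'b list \<Rightarrow> 'k::comm_ring_1"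
  assumes lam: "is_partition lam" "2 \<le> length lam" and w: "length w = sum_list lam"
  shows "(\<Sum>\<sigma>\<in>{\<sigma>. \<sigma> permutes {..<sum_list lam}}. young_sym lam X (permute_list \<sigma> w)) = 0"
proof -
  let ?P = "{\<sigma>. \<sigma> permutes {..<sum_list lam}}"
  define K where "K = (\<Sum>\<sigma>\<in>?P. X (permute_list \<sigma> w))"
  have summand: "(\<Sum>\<sigma>\<in>?P. pact p (pact q X) (permute_list \<sigma> w)) = K"
    if "p \<in> row_group lam" "q \<in> col_group lam" for p q
  proof -
    have pq: "p \<circ> q \<in> ?P"
      using that by (simp add: row_group_def col_group_def permutes_compose)
    have "(\<Sum>\<sigma>\<in>?P. pact p (pact q X) (permute_list \<sigma> w))
        = (\<Sum>\<sigma>\<in>?P. X (permute_list (\<sigma> \<circ> (p \<circ> q)) w))"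
      using that w
      by (intro sum.cong) (auto simp: pact_eq_permute_list permute_list_compose
          row_group_def col_group_def permutes_compose)
    also have "\<dots> = K"
      unfolding K_def using pq
      by (simp add: sum_permutations_compose_right[where f="\<lambda>\<sigma>. X (permute_list \<sigma> w)"])
    finally show ?thesis .
  qed
  have "(\<Sum>\<sigma>\<in>?P. young_sym lam X (permute_list \<sigma> w))
      = (\<Sum>p\<in>row_group lam. \<Sum>q\<in>col_group lam.
           of_int (sign q) * (\<Sum>\<sigma>\<in>?P. pact p (pact q X) (permute_list \<sigma> w)))"
    unfolding young_sym_def by (simp add: sum_distrib_left sum.swap[of _ ?P])
  also have "\<dots> = of_nat (card (row_group lam)) * of_int (\<Sum>q\<in>col_group lam. sign q) * K"
    by (simp add: summand sum_distrib_right mult.assoc)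
  also have "\<dots> = 0" by (simp add: sum_sign_col_group_eq_0[OF lam])
  finally show ?thesis .
qed

lemma schur_subset_tensors:
  "(schur B lam :: ('b list \<Rightarrow> 'k::comm_ring_1) set) \<subseteq> tensors B (sum_list lam)"
proof
  fix S :: "'b list \<Rightarrow> 'k" assume "S \<in> schur B lam"
  then obtain X where X: "X \<in> tensors B (sum_list lam)" and S: "S = young_sym lam X"
    by (auto simp: schur_def)
  have "X (permute_list q (permute_list p w)) = 0"
    if "w \<notin> words B (sum_list lam)" "p \<in> row_group lam" "q \<in> col_group lam" for w p q
  proof (cases "length w = sum_list lam")
    case True
    with that show ?thesis
      by (intro tensors_permute_list_eq_0[OF X])
         (auto simp: words_def row_group_def col_group_def)
  next
    case False
    with X show ?thesis by (simp add: tensors_def words_def)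
  qed
  then show "S \<in> tensors B (sum_list lam)"
    by (simp add: tensors_def S young_sym_def pact_eq_permute_list)
qed

lemma young_sym_diff:
  "young_sym lam (\<lambda>w. X w - Y w) = (\<lambda>w. young_sym lam X w - young_sym lam Y w)"
  by (simp add: young_sym_def pact_def fun_eq_iff right_diff_distrib sum_subtractf)

lemma schur_diff:
  assumes "S \<in> schur B lam" "S' \<in> schur B lam"
  shows "(\<lambda>w. S w - S' w) \<in> schur B lam"
proof -
  obtain X X' where "X \<in> tensors B (sum_list lam)" "S = young_sym lam X"
    and "X' \<in> tensors B (sum_list lam)" "S' = young_sym lam X'"
    using assms by (auto simp: schur_def)
  then show ?thesis
    unfolding schur_def
    by (intro image_eqI[where x="\<lambda>w. X w - X' w"]) (auto simp: young_sym_diff tensors_def)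
qed

lemma schur_symmetric_tensor_eq_0:
  fixes S :: "'b list \<Rightarrow> 'k::field_char_0"
  assumes lam: "is_partition lam" "2 \<le> length lam"
    and S: "S \<in> schur B lam" "symmetric_tensor (sum_list lam) S"
  shows "S = (\<lambda>_. 0)"
proof
  fix w
  show "S w = 0"
  proof (cases "length w = sum_list lam")
    case True
    let ?P = "{\<sigma>. \<sigma> permutes {..<sum_list lam}}"
    obtain X where X: "S = young_sym lam X" using S(1) by (auto simp: schur_def)
    have "of_nat (fact (sum_list lam)) * S w = (\<Sum>\<sigma>\<in>?P. S (permute_list \<sigma> w))"
      using True S(2) by (simp add: card_permutations symmetric_tensorD)
    also have "\<dots> = 0"
      using sum_permutations_young_sym_eq_0[OF lam True] by (simp add: X)
    finally show ?thesis by simp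
  next
    case False
    then show ?thesis using S(1) schur_subset_tensors by (force simp: tensors_def words_def)
  qed
qed

lemma row_group_single_row: "row_group [N] = {\<sigma>. \<sigma> permutes {..<N}}"
proof -
  have "rowof [N] p = 0" if "p < N" for p
    unfolding rowof_def using that by (intro Least_eq_0) simp
  then show ?thesis unfolding row_group_def using permutes_in_image by fastforce
qed

lemma col_group_single_row: "col_group [N] = {id}"
proof -
  have colof: "colof [N] p = p" if "p < N" for p
  proof -
    have "rowof [N] p = 0" unfolding rowof_def using that by (intro Least_eq_0) simp
    then show ?thesis by (simp add: colof_def)
  qed
  have "q = id" if q: "q \<in> col_group [N]" for q
  proof
    fix p
    have q_permutes: "q permutes {..<N}" using q by (simp add: col_group_def)
    show "q p = id p"
    proof (cases "p < N")
      case True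
      then show ?thesis
        using q colof permutes_in_image[OF q_permutes] by (simp add: col_group_def)
    next
      case False
      then show ?thesis using permutes_not_in[OF q_permutes] by simp
    qed
  qed
  moreover have "id \<in> col_group [N]" by (simp add: col_group_def)
  ultimately show ?thesis by blast
qed

lemma young_sym_single_row:
  "young_sym [N] X w = (\<Sum>\<sigma>\<in>{\<sigma>. \<sigma> permutes {..<N}}. X (permute_list \<sigma> w))"
  by (simp add: young_sym_def row_group_single_row col_group_single_row pact_eq_permute_list)

text \<open>On one row the Young symmetriser is \<open>N!\<close> times the symmetrisation projector, which is
  why characteristic 0 is needed.\<close>
lemma schur_single_row:
  fixes B :: "'b set"
  shows "(schur B [N] :: ('b list \<Rightarrow> 'k::field_char_0) set)
           = {S \<in> tensors B N. symmetric_tensor N S}"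
proof (intro equalityI subsetI CollectI conjI)
  let ?P = "{\<sigma>. \<sigma> permutes {..<N}}"
  fix S :: "'b list \<Rightarrow> 'k"
  assume "S \<in> schur B [N]"
  then show "S \<in> tensors B N" using schur_subset_tensors by fastforce
  from \<open>S \<in> schur B [N]\<close> obtain X where X: "S = young_sym [N] X" by (auto simp: schur_def)
  show "symmetric_tensor N S"
    unfolding symmetric_tensor_def
  proof (intro allI impI)
    fix w :: "'b list" and \<tau> assume "length w = N" "\<tau> permutes {..<N}"
    then have "S (permute_list \<tau> w) = (\<Sum>\<sigma>\<in>?P. X (permute_list (\<tau> \<circ> \<sigma>) w))"
      by (simp add: X young_sym_single_row permute_list_compose)
    also have "\<dots> = S w"
      using \<open>\<tau> permutes {..<N}\<close>
      by (simp add: X young_sym_single_row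
          setum_permutations_compose_left[where f="\<lambda>\<sigma>. X (permute_list \<sigma> w)"])
    finally show "S (permute_list \<tau> w) = S w" .
  qed
next
  let ?P = "{\<sigma>. \<sigma> permutes {..<N}}"
  fix S :: "'b list \<Rightarrow> 'k"
  assume S: "S \<in> {S \<in> tensors B N. symmetric_tensor N S}"
  define X where "X = smul (inverse (fact N)) S"
  have "X \<in> tensors B N" using S by (simp add: tensors_def X_def smul_def)
  moreover have "young_sym [N] X = S"
  proof
    fix w
    show "young_sym [N] X w = S w"
    proof (cases "length w = N")
      case True
      then have "young_sym [N] X w = (\<Sum>\<sigma>\<in>?P. inverse (fact N) * S w)"
        unfolding young_sym_single_row X_def smul_def
        using S by (intro sum.cong) (auto simp: symmetric_tensorD)
      then show ?thesis by (simp add: card_permutations)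
    next
      case False
      then show ?thesis
        using S by (simp add: young_sym_single_row X_def smul_def tensors_def words_def)
    qed
  qed
  ultimately show "S \<in> schur B [N]"
    unfolding schur_def by (metis image_eqI sum_list.Cons sum_list.Nil add_0_right)
qed

lemma finite_Lbasis: "finite (Lbasis d)"
proof -
  have "{LW i j | i j. i < j \<and> j < d} \<subseteq> (\<lambda>(i, j). LW i j) ` ({..<d} \<times> {..<d})" by auto
  then have "finite {LW i j | i j. i < j \<and> j < d}" by (rule finite_subset) auto
  then show ?thesis by (simp add: Lbasis_def)
qed

lemma adc_LW:
  "i \<noteq> j \<Longrightarrow> adc x (LW i j) b = (if b = LV j then x i else 0) + (if b = LV i then - x j else 0)"
  by (cases b) auto

lemma emb_list_update_LV:
  assumes "q < length w"
  shows "emb S (w[q := LV j]) =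
    (if \<forall>k<length w. k \<noteq> q \<longrightarrow> w!k \<in> range LV then S ((map unLV w)[q := j]) else 0)"
proof -
  have "set (w[q := LV j]) \<subseteq> range LV \<longleftrightarrow> (\<forall>k<length w. k \<noteq> q \<longrightarrow> w!k \<in> range LV)"
    using assms by (auto simp: set_conv_nth nth_list_update)
  moreover have "map unLV (w[q := LV j]) = (map unLV w)[q := j]" by (simp add: map_update)
  ultimately show ?thesis unfolding emb_def by presburger
qed

definition ad_term :: "nat \<Rightarrow> (nat list \<Rightarrow> 'k::comm_ring_1) \<Rightarrow> lb list \<Rightarrow> nat \<Rightarrow> 'k" where
  "ad_term d T w q =
     (\<Sum>a<d. \<Sum>b\<in>Lbasis d. adc (unitv a) (w!q) b * emb (slice T a) (w[q := b]))"

lemma ad_eq_sum_ad_term: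
  "ad d T w = (if w \<in> words (Lbasis d) (length w) then (\<Sum>q<length w. ad_term d T w q) else 0)"
  unfolding ad_def lie_act_def ad_term_def by (simp add: sum.swap[of _ "{..<d}"])

lemma ad_term_LV: "w!q = LV k \<Longrightarrow> ad_term d T w q = 0"
  by (simp add: ad_term_def)

lemma ad_term_LW:
  assumes "w!q = LW i j" "i \<noteq> j" "i < d" "j < d"
  shows "ad_term d T w q = emb (slice T i) (w[q := LV j]) - emb (slice T j) (w[q := LV i])"
proof -
  have LV_in: "LV i \<in> Lbasis d" "LV j \<in> Lbasis d" using assms by (auto simp: Lbasis_def)
  have "ad_term d T w q = (\<Sum>a<d. unitv a i * emb (slice T a) (w[q := LV j])
        - unitv a j * emb (slice T a) (w[q := LV i]))"
    unfolding ad_term_def assms(1) adc_LW[OF assms(2)]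
    by (rule sum.cong[OF refl])
       (simp add: distrib_right sum.distrib finite_Lbasis LV_in if_distrib[of "\<lambda>x. x * _"]
         cong: if_cong)
  also have "\<dots> = emb (slice T i) (w[q := LV j]) - emb (slice T j) (w[q := LV i])"
    using assms by (simp add: sum_subtractf unitv_def if_distrib[of "\<lambda>x. x * _"] cong: if_cong)
  finally show ?thesis .
qed

lemma ad_diff: "ad d (\<lambda>w. T w - T' w) = (\<lambda>w. ad d T w - ad d T' w)"
proof -
  have "emb (slice (\<lambda>w. T w - T' w) a) = (\<lambda>v. emb (slice T a) v - emb (slice T' a) v)" for a
    by (simp add: emb_def slice_def fun_eq_iff)
  then show ?thesis
    by (simp add: ad_eq_sum_ad_term ad_term_def fun_eq_iff right_diff_distrib sum_subtractf)
qed

lemma ad_single_LW: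
  assumes "i < j" "j < d" "v \<in> words {..<d} n" "p < n"
  shows "ad d T ((map LV v)[p := LW i j]) = T (i # v[p := j]) - T (j # v[p := i])"
proof -
  define w where "w = (map LV v)[p := LW i j]"
  have v: "length v = n" "set v \<subseteq> {..<d}" using assms(3) by (auto simp: words_def)
  have w_p: "w!p = LW i j" using v assms by (simp add: w_def)
  have w_k: "w!k = LV (v!k)" if "k < n" "k \<noteq> p" for k using that v by (simp add: w_def)
  have "w \<in> words (Lbasis d) (length w)"
    using v assms by (auto simp: w_def words_def Lbasis_def set_conv_nth nth_list_update)
  moreover have "(\<Sum>q<length w. ad_term d T w q) = (\<Sum>q\<in>{p}. ad_term d T w q)"
    using v assms by (intro sum.mono_neutral_right) (auto simp: w_def w_k ad_term_LV)
  moreover have "ad_term d T w p = T (i # v[p := j]) - T (j # v[p := i])"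
  proof -
    have "map unLV w = v[p := 0]" "length w = n"
      using v by (simp_all add: w_def map_update comp_def)
    then show ?thesis
      using assms by (simp add: ad_term_LW[OF w_p] emb_list_update_LV w_k slice_def)
  qed
  ultimately show ?thesis by (simp add: ad_eq_sum_ad_term w_def)
qed

lemma symmetric_tensor_if_ad_eq_0:
  assumes T: "T \<in> tensors {..<d} (Suc n)" and ad: "ad d T = (\<lambda>_. 0)"
  shows "symmetric_tensor (Suc n) T"
proof (rule symmetric_tensor_if_head_transpositions)
  fix w :: "nat list" and k assume w: "length w = Suc n" and k: "k < Suc n"
  have t_permutes: "Transposition.transpose 0 k permutes {..<length w}"
    using w k by (intro permutes_swap_id) auto
  show "T (permute_list (Transposition.transpose 0 k) w) = T w"
  proof (cases "w \<in> words {..<d} (Suc n)")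
    case False
    then show ?thesis
      using T tensors_permute_list_eq_0[OF T False t_permutes] by (simp add: tensors_def)
  next
    case True
    show ?thesis
    proof (cases k)
      case 0
      then show ?thesis by simp
    next
      case (Suc p)
      obtain a v where w_eq: "w = a # v" using w by (cases w) auto
      have v: "v \<in> words {..<d} n" "p < n" "a < d"
        using True w_eq Suc k by (auto simp: words_def)
      then have "set v \<subseteq> {..<d}" "p < length v" by (auto simp: words_def)
      then have "v!p < d" by (meson lessThan_iff nth_mem subsetD)
      have swap: "T (i # v[p := j]) = T (j # v[p := i])" if "i < j" "j < d" for i j
        using ad_single_LW[OF that v(1,2), of T] ad by (simp add: fun_eq_iff)
      have "T (v!p # v[p := a]) = T (a # v)"
        using swap[of a "v!p"] swap[of "v!p" a] v \<open>v!p < d\<close>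
        by (cases a "v!p" rule: linorder_cases) auto
      then show ?thesis using v by (simp add: w_eq Suc permute_list_transpose_0_Suc words_def)
    qed
  qed
qed

lemma ad_eq_0_if_symmetric_tensor:
  assumes T: "T \<in> tensors {..<d} (Suc n)" and sym: "symmetric_tensor (Suc n) T"
  shows "ad d T = (\<lambda>_. 0)"
proof
  fix w
  have swap: "T (i # u[q := j]) = T (j # u[q := i])" if "q < length u" for i j u q
  proof (cases "length u = n")
    case True
    then show ?thesis
      using symmetric_tensorD[OF sym, of "i # u[q := j]" "Transposition.transpose 0 (Suc q)"] that
      by (simp add: permute_list_transpose_0_Suc permutes_swap_id)
  next
    case False
    then show ?thesis using T by (simp add: tensors_def words_def)
  qed
  have "ad_term d T w q = 0" if "w \<in> words (Lbasis d) (length w)" "q < length w" for q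
  proof (cases "w!q")
    case (LV k)
    then show ?thesis by (rule ad_term_LV)
  next
    case (LW i j)
    have "w!q \<in> Lbasis d" using that by (auto simp: words_def)
    then have "i < j" "j < d" using LW by (auto simp: Lbasis_def)
    then show ?thesis
      using that swap[of q "map unLV w" j i]
      by (auto simp: ad_term_LW[OF LW] emb_list_update_LV slice_def)
  qed
  then show "ad d T w = 0" by (simp add: ad_eq_sum_ad_term)
qed

lemma ad_eq_0_iff_symmetric_tensor:
  "T \<in> tensors {..<d} (Suc n) \<Longrightarrow> ad d T = (\<lambda>_. 0) \<longleftrightarrow> symmetric_tensor (Suc n) T"
  using symmetric_tensor_if_ad_eq_0 ad_eq_0_if_symmetric_tensor by blast

lemma VtensS_diff:
  assumes "T \<in> VtensS d lam" "T' \<in> VtensS d lam"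
  shows "(\<lambda>w. T w - T' w) \<in> VtensS d lam"
proof -
  have "slice (\<lambda>w. T w - T' w) a = (\<lambda>u. slice T a u - slice T' a u)" for a
    by (simp add: slice_def)
  then show ?thesis using assms by (auto simp: VtensS_def tensors_def intro: schur_diff)
qed

lemma VtensS_ad_eq_0_imp_eq_0:
  fixes T :: "nat list \<Rightarrow> 'k::field_char_0"
  assumes lam: "is_partition lam" "2 \<le> length lam"
    and T: "T \<in> VtensS d lam" "ad d T = (\<lambda>_. 0)"
  shows "T = (\<lambda>_. 0)"
proof
  fix w
  have tensor: "T \<in> tensors {..<d} (Suc (sum_list lam))" using T by (simp add: VtensS_def)
  with T(2) have sym: "symmetric_tensor (Suc (sum_list lam)) T"
    by (simp add: ad_eq_0_iff_symmetric_tensor)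
  show "T w = 0"
  proof (cases "w \<noteq> [] \<and> hd w < d")
    case True
    then obtain a u where w: "w = a # u" and "a < d" by (cases w) auto
    then have "slice T a \<in> schur {..<d} lam" using T(1) by (simp add: VtensS_def)
    then have "slice T a = (\<lambda>_. 0)"
      by (rule schur_symmetric_tensor_eq_0[OF lam _ symmetric_tensor_slice[OF sym]])
    then show ?thesis by (simp add: w slice_def fun_eq_iff)
  next
    case False
    then have "w \<notin> words {..<d} (Suc (sum_list lam))"
      by (cases w) (auto simp: words_def)
    then show ?thesis using tensor by (simp add: tensors_def)
  qed
qed

lemma inj_on_ad_VtensS:
  assumes "is_partition lam" "2 \<le> length lam"
  shows "inj_on (ad d) (VtensS d lam :: (nat list \<Rightarrow> 'k::field_char_0) set)"
proof (rule inj_onI)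
  fix T T' :: "nat list \<Rightarrow> 'k"
  assume T: "T \<in> VtensS d lam" "T' \<in> VtensS d lam" and eq: "ad d T = ad d T'"
  have "(\<lambda>w. T w - T' w) = (\<lambda>_. 0)"
    by (rule VtensS_ad_eq_0_imp_eq_0[OF assms VtensS_diff[OF T]]) (simp add: ad_diff eq)
  then show "T = T'" by (simp add: fun_eq_iff)
qed

lemma ad_kernel_single_row:
  "{T \<in> VtensS d [n]. ad d T = (\<lambda>_. 0)}
     = (schur {..<d} [n + 1] :: (nat list \<Rightarrow> 'k::field_char_0) set)"
proof -
  have "T \<in> VtensS d [n] \<and> ad d T = (\<lambda>_. 0) \<longleftrightarrow>
          T \<in> tensors {..<d} (Suc n) \<and> symmetric_tensor (Suc n) T" for T :: "nat list \<Rightarrow> 'k"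
  proof (cases "T \<in> tensors {..<d} (Suc n)")
    case True
    then have "symmetric_tensor (Suc n) T \<Longrightarrow> T \<in> VtensS d [n]"
      by (simp add: VtensS_def schur_single_row slice_tensors symmetric_tensor_slice)
    with True show ?thesis by (auto simp: VtensS_def ad_eq_0_iff_symmetric_tensor)
  next
    case False
    then show ?thesis by (simp add: VtensS_def)
  qed
  then show ?thesis by (auto simp: schur_single_row)
qed

theorem mainTheorem15:
  fixes d :: nat and lam :: "nat list"
  assumes "is_partition lam"
  shows "(2 \<le> length lam \<longrightarrow>
            inj_on (ad d) (VtensS d lam :: (nat list \<Rightarrow> 'k::field_char_0) set))
       \<and> (\<forall>n\<ge>1. lam = [n] \<longrightarrow>
            (\<exists>f. linear_on {T \<in> VtensS d lam. ad d T = (\<lambda>_. 0)} f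
               \<and> bij_betw f {T \<in> VtensS d lam. ad d T = (\<lambda>_. 0)}
                   (schur {..<d} [n + 1] :: (nat list \<Rightarrow> 'k) set)
               \<and> (\<forall>g\<in>GLm d. \<forall>T\<in>{T \<in> VtensS d lam. ad d T = (\<lambda>_. 0)}.
                     f (gl_act d g T) = gl_act d g (f T))))"
proof (intro conjI impI allI)
  assume "2 \<le> length lam"
  then show "inj_on (ad d) (VtensS d lam :: (nat list \<Rightarrow> 'k) set)"
    using inj_on_ad_VtensS[OF assms] by blast
next
  fix n :: nat assume "lam = [n]"
  then show "\<exists>f. linear_on {T \<in> VtensS d lam. ad d T = (\<lambda>_. 0)} f
               \<and> bij_betw f {T \<in> VtensS d lam. ad d T = (\<lambda>_. 0)}
                   (schur {..<d} [n + 1] :: (nat list \<Rightarrow> 'k) set)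
               \<and> (\<forall>g\<in>GLm d. \<forall>T\<in>{T \<in> VtensS d lam. ad d T = (\<lambda>_. 0)}.
                     f (gl_act d g T) = gl_act d g (f T))"
    by (intro exI[of _ id]) (simp add: ad_kernel_single_row linear_on_def)
qed

end
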